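(* Let $X\sim P_X$ on $\mathcal{X}$, let $(\Omega_k^\star)_{k=1}^K$ be a measurable partition of $\mathcal{X}$ up to null sets with measurable $f_k^\star$, $\mu=\sum_k\mathbf{1}_{\Omega_k^\star}f_k^\star$, $|\mu(X)|\le B$ a.s. (and $Y=\mu(X)+\xi$, $\mathbb{E}[\xi\mid X]=0$, $\mathbb{E}\xi^2<\infty$). Let experts satisfy $\sup_{k,x}|f_k(x;\theta_k)|\le B_{\mathrm{stu}}$ for all parameters considered. Fix $k$, $\varepsilon\in(0,1/2)$, $\tau>0$ and set $A_{k,\varepsilon}=\Omega_k^\star\cap\mathcal{G}_\varepsilon(\tau;\phi)\cap\{x:p_k^{(\tau)}(x;\phi)\ge1-\varepsilon\}$. Then \[\mathbb{E}\big[(\mu(X)-h_{\theta,\phi,\tau}(X))^2\mathbf{1}_{A_{k,\varepsilon}}(X)\big]\ge\tfrac12\mathbb{E}\big[|f_k(X;\theta_k)-f_k^\star(X)|^2\mathbf{1}_{A_{k,\varepsilon}}(X)\big]-4B_{\mathrm{stu}}^2\varepsilon^2P_X(A_{k,\varepsilon}).\]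
   Context: $p_k^{(\tau)}(x;\phi)=e^{a_k(x;\phi)/\tau}/\sum_je^{a_j(x;\phi)/\tau}$ for router logits $a_k(\cdot;\phi)$; $h_{\theta,\phi,\tau}=\sum_kp_k^{(\tau)}f_k(\cdot;\theta_k)$; $\mathcal{G}_\varepsilon(\tau;\phi)=\{x:\max_jp_j^{(\tau)}(x;\phi)>1-\varepsilon\}$. *)

theory Defs
  imports "HOL-Probability.Probability"
begin

definition gate :: "nat \<Rightarrow> (nat \<Rightarrow> 'q \<Rightarrow> 'x \<Rightarrow> real) \<Rightarrow> real \<Rightarrow> 'q \<Rightarrow> nat \<Rightarrow> 'x \<Rightarrow> real" where
  "gate K a \<tau> \<phi> k x = exp (a k \<phi> x / \<tau>) / (\<Sum>j\<in>{1..K}. exp (a j \<phi> x / \<tau>))"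

definition moe :: "nat \<Rightarrow> (nat \<Rightarrow> 'q \<Rightarrow> 'x \<Rightarrow> real) \<Rightarrow> (nat \<Rightarrow> 'p \<Rightarrow> 'x \<Rightarrow> real)
    \<Rightarrow> (nat \<Rightarrow> 'p) \<Rightarrow> 'q \<Rightarrow> real \<Rightarrow> 'x \<Rightarrow> real" where
  "moe K a f \<theta> \<phi> \<tau> x = (\<Sum>k\<in>{1..K}. gate K a \<tau> \<phi> k x * f k (\<theta> k) x)"

definition confident :: "'x measure \<Rightarrow> nat \<Rightarrow> (nat \<Rightarrow> 'q \<Rightarrow> 'x \<Rightarrow> real) \<Rightarrow> real \<Rightarrow> real \<Rightarrow> 'q \<Rightarrow> 'x set" where
  "confident P K a \<epsilon> \<tau> \<phi> =
     {x \<in> space P. Max ((\<lambda>j. gate K a \<tau> \<phi> j x) ` {1..K}) > 1 - \<epsilon>}"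

definition teacher :: "nat \<Rightarrow> (nat \<Rightarrow> 'x set) \<Rightarrow> (nat \<Rightarrow> 'x \<Rightarrow> real) \<Rightarrow> 'x \<Rightarrow> real" where
  "teacher K \<Omega> fs x = (\<Sum>k\<in>{1..K}. indicator (\<Omega> k) x * fs k x)"

end

theory Submission
  imports Defs
begin

text \<open>On \<open>A\<^sub>k\<^sub>,\<^sub>\<epsilon>\<close> the teacher coincides with \<open>f\<^sup>\<star>\<^sub>k\<close> almost surely, while the mixture is a
  convex combination of experts bounded by \<open>B\<^sub>s\<^sub>t\<^sub>u\<close> that puts weight at least \<open>1 - \<epsilon>\<close> on
  expert \<open>k\<close>; hence it lies within \<open>2 B\<^sub>s\<^sub>t\<^sub>u \<epsilon>\<close> of \<open>f\<^sub>k\<close>. Writing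
  \<open>\<mu> - h = (f\<^sup>\<star>\<^sub>k - f\<^sub>k) + (f\<^sub>k - h)\<close> and using \<open>(u + v)\<^sup>2 \<ge> u\<^sup>2/2 - v\<^sup>2\<close> gives the
  pointwise bound, which is then integrated over \<open>A\<^sub>k\<^sub>,\<^sub>\<epsilon>\<close>.\<close>

lemma half_square_minus_le_square_diff:
  fixes t g h \<delta> :: real
  assumes "\<bar>h - g\<bar> \<le> \<delta>"
  shows "1/2 * (g - t)\<^sup>2 - \<delta>\<^sup>2 \<le> (t - h)\<^sup>2"
proof -
  have "(h - g)\<^sup>2 \<le> \<delta>\<^sup>2"
    using assms by (metis abs_ge_zero dual_order.trans power2_abs power_mono)
  moreover have "0 \<le> ((t - g) + 2 * (g - h))\<^sup>2" by simp
  ultimately show ?thesis by (simp add: power2_eq_square algebra_simps)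
qed

lemma power2_diff_le_of_abs_le:
  fixes y z B C :: real
  assumes "\<bar>y\<bar> \<le> B" and "\<bar>z\<bar> \<le> C"
  shows "(y - z)\<^sup>2 \<le> (B + C)\<^sup>2"
proof -
  have "\<bar>y - z\<bar> \<le> B + C" using assms abs_triangle_ineq4[of y z] by linarith
  then show ?thesis by (metis abs_ge_zero power2_abs power_mono)
qed

lemma gate_nonneg: "0 \<le> gate K a \<tau> \<phi> j x"
  unfolding gate_def by (intro divide_nonneg_nonneg sum_nonneg) auto

lemma sum_gate_eq_1:
  assumes "K \<ge> 1"
  shows "(\<Sum>j\<in>{1..K}. gate K a \<tau> \<phi> j x) = 1"
proof -
  have "(\<Sum>j\<in>{1..K}. exp (a j \<phi> x / \<tau>)) > 0"
    using assms by (intro sum_pos) auto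
  then show ?thesis unfolding gate_def by (simp add: sum_divide_distrib[symmetric])
qed

lemma gate_measurable:
  assumes "\<And>j. j \<in> {1..K} \<Longrightarrow> a j \<phi> \<in> borel_measurable M" and "k \<in> {1..K}"
  shows "gate K a \<tau> \<phi> k \<in> borel_measurable M"
  unfolding gate_def[abs_def] using assms
  by (intro borel_measurable_divide borel_measurable_sum borel_measurable_exp) auto

lemma moe_measurable:
  assumes "\<And>j. j \<in> {1..K} \<Longrightarrow> a j \<phi> \<in> borel_measurable M"
    and "\<And>j. j \<in> {1..K} \<Longrightarrow> f j (\<theta> j) \<in> borel_measurable M"
  shows "moe K a f \<theta> \<phi> \<tau> \<in> borel_measurable M"
  unfolding moe_def[abs_def] using assms gate_measurable[where a = a and \<phi> = \<phi>, OF assms(1)]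
  by (intro borel_measurable_sum borel_measurable_times) auto

lemma teacher_measurable:
  assumes "\<And>j. j \<in> {1..K} \<Longrightarrow> \<Omega> j \<in> sets M"
    and "\<And>j. j \<in> {1..K} \<Longrightarrow> fs j \<in> borel_measurable M"
  shows "teacher K \<Omega> fs \<in> borel_measurable M"
  unfolding teacher_def[abs_def] using assms
  by (intro borel_measurable_sum borel_measurable_times borel_measurable_indicator) auto

lemma confident_measurable:
  assumes "\<And>j. j \<in> {1..K} \<Longrightarrow> a j \<phi> \<in> borel_measurable M"
  shows "confident M K a \<epsilon> \<tau> \<phi> \<in> sets M"
proof -
  have "(\<lambda>x. Max ((\<lambda>j. gate K a \<tau> \<phi> j x) ` {1..K})) \<in> borel_measurable M"
    using gate_measurable[where a = a and \<phi> = \<phi>, OF assms] by (intro borel_measurable_Max) auto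
  then show ?thesis unfolding confident_def by measurable
qed

lemma confident_part_measurable:
  assumes "\<Omega> \<in> sets M" and "\<And>j. j \<in> {1..K} \<Longrightarrow> a j \<phi> \<in> borel_measurable M" and "k \<in> {1..K}"
  shows "\<Omega> \<inter> confident M K a \<epsilon> \<tau> \<phi> \<inter> {x. gate K a \<tau> \<phi> k x \<ge> c} \<in> sets M"
proof -
  have "confident M K a \<epsilon> \<tau> \<phi> \<in> sets M" "gate K a \<tau> \<phi> k \<in> borel_measurable M"
    by (rule confident_measurable gate_measurable; use assms in simp)+
  moreover have "\<Omega> \<inter> confident M K a \<epsilon> \<tau> \<phi> \<inter> {x. gate K a \<tau> \<phi> k x \<ge> c}
      = \<Omega> \<inter> confident M K a \<epsilon> \<tau> \<phi> \<inter> {x \<in> space M. gate K a \<tau> \<phi> k x \<ge> c}"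
    unfolding confident_def by blast
  ultimately show ?thesis using assms(1) by simp
qed

lemma abs_moe_le:
  assumes "K \<ge> 1" and "\<And>j. j \<in> {1..K} \<Longrightarrow> \<bar>f j (\<theta> j) x\<bar> \<le> C"
  shows "\<bar>moe K a f \<theta> \<phi> \<tau> x\<bar> \<le> C"
proof -
  have "\<bar>moe K a f \<theta> \<phi> \<tau> x\<bar> \<le> (\<Sum>j\<in>{1..K}. \<bar>gate K a \<tau> \<phi> j x * f j (\<theta> j) x\<bar>)"
    unfolding moe_def by (rule sum_abs)
  also have "\<dots> \<le> (\<Sum>j\<in>{1..K}. gate K a \<tau> \<phi> j x * C)"
    using assms(2) gate_nonneg[of K a \<tau> \<phi> _ x] by (intro sum_mono) (simp add: abs_mult mult_left_mono)
  also have "\<dots> = C"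
    using sum_gate_eq_1[OF assms(1), of a \<tau> \<phi> x] by (simp add: sum_distrib_right[symmetric])
  finally show ?thesis .
qed

lemma abs_moe_minus_expert_le:
  assumes "K \<ge> 1" and k: "k \<in> {1..K}" and bdd: "\<And>j. j \<in> {1..K} \<Longrightarrow> \<bar>f j (\<theta> j) x\<bar> \<le> C"
  shows "\<bar>moe K a f \<theta> \<phi> \<tau> x - f k (\<theta> k) x\<bar> \<le> 2 * C * (1 - gate K a \<tau> \<phi> k x)"
proof -
  let ?p = "\<lambda>j. gate K a \<tau> \<phi> j x" and ?d = "\<lambda>j. f j (\<theta> j) x - f k (\<theta> k) x"
  have sum_p: "(\<Sum>j\<in>{1..K}. ?p j) = 1" by (rule sum_gate_eq_1[OF assms(1)])
  have "moe K a f \<theta> \<phi> \<tau> x - f k (\<theta> k) x = (\<Sum>j\<in>{1..K}. ?p j * ?d j)"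
    using sum_p unfolding moe_def
    by (simp add: right_diff_distrib sum_subtractf sum_distrib_right[symmetric])
  also have "\<dots> = (\<Sum>j\<in>{1..K}-{k}. ?p j * ?d j)"
    using k by (subst sum.remove[of _ k]) auto
  also have "\<bar>\<dots>\<bar> \<le> (\<Sum>j\<in>{1..K}-{k}. \<bar>?p j * ?d j\<bar>)"
    by (rule sum_abs)
  also have "\<dots> \<le> (\<Sum>j\<in>{1..K}-{k}. ?p j * (2 * C))"
  proof (rule sum_mono)
    fix j assume "j \<in> {1..K}-{k}"
    then have "\<bar>?d j\<bar> \<le> 2 * C" using bdd[of j] bdd[OF k] by auto
    then show "\<bar>?p j * ?d j\<bar> \<le> ?p j * (2 * C)"
      using gate_nonneg[of K a \<tau> \<phi> j x] by (simp add: abs_mult mult_left_mono)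
  qed
  also have "\<dots> = 2 * C * (1 - ?p k)"
    unfolding sum_distrib_right[symmetric] using sum_p k by (simp add: sum_diff1)
  finally show ?thesis .
qed

lemma moe_sq_error_bounds:
  assumes "K \<ge> 1" and k: "k \<in> {1..K}" and bdd: "\<And>j. j \<in> {1..K} \<Longrightarrow> \<bar>f j (\<theta> j) x\<bar> \<le> C"
    and y: "\<bar>y\<bar> \<le> B" and "0 \<le> \<epsilon>" and confident_k: "gate K a \<tau> \<phi> k x \<ge> 1 - \<epsilon>"
  shows "(y - moe K a f \<theta> \<phi> \<tau> x)\<^sup>2 \<le> (B + C)\<^sup>2"
    and "\<bar>f k (\<theta> k) x - y\<bar>\<^sup>2 \<le> (B + C)\<^sup>2"
    and "1/2 * \<bar>f k (\<theta> k) x - y\<bar>\<^sup>2 - 4 * C\<^sup>2 * \<epsilon>\<^sup>2 \<le> (y - moe K a f \<theta> \<phi> \<tau> x)\<^sup>2"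
proof -
  show "(y - moe K a f \<theta> \<phi> \<tau> x)\<^sup>2 \<le> (B + C)\<^sup>2"
    using y abs_moe_le[of K f \<theta> x C a \<phi> \<tau>, OF assms(1) bdd] by (rule power2_diff_le_of_abs_le)
  show "\<bar>f k (\<theta> k) x - y\<bar>\<^sup>2 \<le> (B + C)\<^sup>2"
    using power2_diff_le_of_abs_le[OF y bdd[OF k]] by (simp add: power2_commute)
  have "0 \<le> C" using bdd[OF k] by linarith
  then have "2 * C * (1 - gate K a \<tau> \<phi> k x) \<le> 2 * C * \<epsilon>"
    using confident_k by (intro mult_left_mono) auto
  then have "\<bar>moe K a f \<theta> \<phi> \<tau> x - f k (\<theta> k) x\<bar> \<le> 2 * C * \<epsilon>"
    using abs_moe_minus_expert_le[of K k f \<theta> x C a \<phi> \<tau>, OF assms(1) k bdd] by linarith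
  from half_square_minus_le_square_diff[OF this, of y]
  show "1/2 * \<bar>f k (\<theta> k) x - y\<bar>\<^sup>2 - 4 * C\<^sup>2 * \<epsilon>\<^sup>2 \<le> (y - moe K a f \<theta> \<phi> \<tau> x)\<^sup>2"
    by (simp add: power_mult_distrib)
qed

lemma teacher_eq_on_own_part:
  assumes "k \<in> {1..K}" "x \<in> \<Omega> k" and "\<And>j. j \<in> {1..K} - {k} \<Longrightarrow> x \<notin> \<Omega> j"
  shows "teacher K \<Omega> fs x = fs k x"
proof -
  have "teacher K \<Omega> fs x = indicator (\<Omega> k) x * fs k x + (\<Sum>j\<in>{1..K}-{k}. indicator (\<Omega> j) x * fs j x)"
    unfolding teacher_def using assms(1) by (subst sum.remove[of _ k]) auto
  also have "(\<Sum>j\<in>{1..K}-{k}. indicator (\<Omega> j) x * fs j x) = 0"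
    using assms(3) by (intro sum.neutral) auto
  finally show ?thesis using assms(2) by simp
qed

lemma (in finite_measure) AE_teacher_eq_on_own_part:
  assumes "\<And>j. j \<in> {1..K} \<Longrightarrow> \<Omega> j \<in> sets M"
    and "\<And>i j. i \<in> {1..K} \<Longrightarrow> j \<in> {1..K} \<Longrightarrow> i \<noteq> j \<Longrightarrow> measure M (\<Omega> i \<inter> \<Omega> j) = 0"
    and k: "k \<in> {1..K}"
  shows "AE x in M. x \<in> \<Omega> k \<longrightarrow> teacher K \<Omega> fs x = fs k x"
proof -
  have "AE x in M. \<forall>j\<in>{1..K}-{k}. x \<notin> \<Omega> k \<inter> \<Omega> j"
  proof (rule AE_finite_allI)
    fix j assume "j \<in> {1..K}-{k}"
    then have "\<Omega> k \<inter> \<Omega> j \<in> null_sets M"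
      using assms by (auto simp: null_sets_def emeasure_eq_measure)
    then show "AE x in M. x \<notin> \<Omega> k \<inter> \<Omega> j" by (rule AE_not_in)
  qed simp
  then show ?thesis
    by eventually_elim (auto intro: teacher_eq_on_own_part[OF k])
qed

lemma (in finite_measure) integral_indicator_lower_bound:
  fixes u v :: "'a \<Rightarrow> real"
  assumes A: "A \<in> sets M" and u: "u \<in> borel_measurable M" and v: "v \<in> borel_measurable M"
    and u_bdd: "AE x in M. x \<in> A \<longrightarrow> \<bar>u x\<bar> \<le> C"
    and v_bdd: "AE x in M. x \<in> A \<longrightarrow> \<bar>v x\<bar> \<le> C"
    and lower: "AE x in M. x \<in> A \<longrightarrow> c * v x - d \<le> u x"
  shows "c * (\<integral>x. v x * indicator A x \<partial>M) - d * measure M A \<le> (\<integral>x. u x * indicator A x \<partial>M)"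
proof -
  have bounded_integrable: "integrable M (\<lambda>x. w x * indicator A x)"
    if "w \<in> borel_measurable M" "AE x in M. x \<in> A \<longrightarrow> \<bar>w x\<bar> \<le> C" for w
  proof (rule integrable_const_bound)
    show "AE x in M. norm (w x * indicator A x) \<le> \<bar>C\<bar>"
      using that(2) by eventually_elim (auto split: split_indicator)
  qed (use A that(1) in measurable)
  have int_A: "integrable M (\<lambda>x. d * indicator A x)"
    using A by (intro integrable_mult_right integrable_real_indicator) (auto simp: emeasure_eq_measure)
  have "c * (\<integral>x. v x * indicator A x \<partial>M) - d * measure M A
      = (\<integral>x. c * (v x * indicator A x) - d * indicator A x \<partial>M)"
    using bounded_integrable[OF v v_bdd] int_A A by simp
  also have "\<dots> \<le> (\<integral>x. u x * indicator A x \<partial>M)"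
  proof (rule integral_mono_AE)
    show "AE x in M. c * (v x * indicator A x) - d * indicator A x \<le> u x * indicator A x"
      using lower by eventually_elim (auto split: split_indicator)
  qed (use bounded_integrable[OF u u_bdd] bounded_integrable[OF v v_bdd] int_A in
      \<open>auto intro: integrable_diff integrable_mult_right\<close>)
  finally show ?thesis .
qed

theorem mainTheorem10:
  fixes P :: "'x measure" and K :: nat and \<Omega> :: "nat \<Rightarrow> 'x set"
    and fs :: "nat \<Rightarrow> 'x \<Rightarrow> real" and B Bstu :: real
    and f :: "nat \<Rightarrow> 'p \<Rightarrow> 'x \<Rightarrow> real" and \<theta> :: "nat \<Rightarrow> 'p"
    and a :: "nat \<Rightarrow> 'q \<Rightarrow> 'x \<Rightarrow> real" and \<phi> :: 'q
    and k :: nat and \<epsilon> \<tau> :: real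
  assumes P: "prob_space P"
    and K: "K \<ge> 1"
    and \<Omega>_meas: "\<And>j. j \<in> {1..K} \<Longrightarrow> \<Omega> j \<in> sets P"
    and \<Omega>_disj: "\<And>i j. i \<in> {1..K} \<Longrightarrow> j \<in> {1..K} \<Longrightarrow> i \<noteq> j \<Longrightarrow> measure P (\<Omega> i \<inter> \<Omega> j) = 0"
    and \<Omega>_cover: "measure P (space P - (\<Union>j\<in>{1..K}. \<Omega> j)) = 0"
    and fs_meas: "\<And>j. j \<in> {1..K} \<Longrightarrow> fs j \<in> borel_measurable P"
    and mu_bdd: "AE x in P. \<bar>teacher K \<Omega> fs x\<bar> \<le> B"
    and f_meas: "\<And>j. j \<in> {1..K} \<Longrightarrow> f j (\<theta> j) \<in> borel_measurable P"
    and f_bdd: "\<And>j t x. j \<in> {1..K} \<Longrightarrow> x \<in> space P \<Longrightarrow> \<bar>f j t x\<bar> \<le> Bstu"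
    and a_meas: "\<And>j. j \<in> {1..K} \<Longrightarrow> a j \<phi> \<in> borel_measurable P"
    and k: "k \<in> {1..K}"
    and \<epsilon>: "0 < \<epsilon>" "\<epsilon> < 1/2"
    and \<tau>: "\<tau> > 0"
  defines "A \<equiv> \<Omega> k \<inter> confident P K a \<epsilon> \<tau> \<phi> \<inter> {x. gate K a \<tau> \<phi> k x \<ge> 1 - \<epsilon>}"
  shows "(\<integral>x. (teacher K \<Omega> fs x - moe K a f \<theta> \<phi> \<tau> x)\<^sup>2 * indicator A x \<partial>P)
     \<ge> 1/2 * (\<integral>x. \<bar>f k (\<theta> k) x - fs k x\<bar>\<^sup>2 * indicator A x \<partial>P)
        - 4 * Bstu\<^sup>2 * \<epsilon>\<^sup>2 * measure P A"
proof -
  interpret prob_space P by (rule P)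
  have A_space: "A \<subseteq> space P" unfolding A_def confident_def by auto
  have A_meas: "A \<in> events"
    unfolding A_def by (rule confident_part_measurable) (use \<Omega>_meas a_meas k in simp_all)
  have teacher_on_part: "AE x in P. x \<in> \<Omega> k \<longrightarrow> teacher K \<Omega> fs x = fs k x"
    by (rule AE_teacher_eq_on_own_part) (use \<Omega>_meas \<Omega>_disj k in auto)
  have pointwise: "AE x in P. x \<in> A \<longrightarrow>
      (teacher K \<Omega> fs x - moe K a f \<theta> \<phi> \<tau> x)\<^sup>2 \<le> (B + Bstu)\<^sup>2 \<and>
      \<bar>f k (\<theta> k) x - fs k x\<bar>\<^sup>2 \<le> (B + Bstu)\<^sup>2 \<and>
      1/2 * \<bar>f k (\<theta> k) x - fs k x\<bar>\<^sup>2 - 4 * Bstu\<^sup>2 * \<epsilon>\<^sup>2 \<le> (teacher K \<Omega> fs x - moe K a f \<theta> \<phi> \<tau> x)\<^sup>2"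
    (is "AE x in P. x \<in> A \<longrightarrow> ?bounds x")
    using teacher_on_part mu_bdd
  proof (eventually_elim, intro impI)
    fix x assume "x \<in> \<Omega> k \<longrightarrow> teacher K \<Omega> fs x = fs k x" "\<bar>teacher K \<Omega> fs x\<bar> \<le> B" and x: "x \<in> A"
    then have teacher_eq: "teacher K \<Omega> fs x = fs k x" and fs_bdd: "\<bar>fs k x\<bar> \<le> B"
      by (auto simp: A_def)
    have gate_k: "1 - \<epsilon> \<le> gate K a \<tau> \<phi> k x" using x by (simp add: A_def)
    have experts_bdd: "\<And>j. j \<in> {1..K} \<Longrightarrow> \<bar>f j (\<theta> j) x\<bar> \<le> Bstu" using f_bdd x A_space by blast
    show "?bounds x"
      using moe_sq_error_bounds[where f = f and \<theta> = \<theta> and x = x and C = Bstu,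
          OF K k experts_bdd fs_bdd less_imp_le[OF \<epsilon>(1)] gate_k]
      unfolding teacher_eq by blast
  qed
  have "teacher K \<Omega> fs \<in> borel_measurable P" "moe K a f \<theta> \<phi> \<tau> \<in> borel_measurable P"
    by (rule teacher_measurable moe_measurable; use \<Omega>_meas fs_meas a_meas f_meas in simp)+
  then show ?thesis
    using pointwise f_meas[OF k] fs_meas[OF k]
    by (intro integral_indicator_lower_bound[OF A_meas, where C = "(B + Bstu)\<^sup>2"])
      (auto elim!: eventually_mono)
qed

end
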